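(* Let $G$ be a finite interdependent game and consider the unperturbed process $P^0$ on the state space $X=\prod_{i\in N}(S_i\times\{C,D\})$ described in the context. A state $x=(x_1,\dots,x_n)\in X$ belongs to a recurrent class of $P^0$ if and only if either (Form 1) $x_i=[s_i^b,C]$ for every $i\in N$ (with $s_i^b\in S_i$), in which case the singleton $\{x\}$ is a recurrent class (the set of such states is denoted $C^0$); or (Form 2) $x_i=[s_i^b,D]$ for every $i\in N$, and all states of this form together constitute a single recurrent class, denoted $D^0$.
   Context: Game: agents $N=\{1,\dots,n\}$, finite action sets $\mathcal{A}_i$, $\mathcal{A}=\prod_i\mathcal{A}_i$, utilities $U_i:\mathcal{A}\to[0,1]$. Interdependent: for every $a\in\mathcal{A}$ and proper subset $J\subsetneq N$ there exist $i\notin J$ and $a'_J\in\prod_{j\in J}\mathcal{A}_j$ with $U_i(a'_J,a_{-J})\neq U_i(a_J,a_{-J})$. Strategies: for a fixed integer $\Omega\ge1$, $S_i=\bigcup_{\omega=1}^\Omega\mathcal{A}_i^\omega$; $s_i=(a_i^1,\dots,a_i^\omega)$ is the map $[0,1]\to\mathcal{A}_i$ sending $z\in[(k-1)/\omega,k/\omega)$ to $a_i^k$ ($k<\omega$) and $z\in[(\omega-1)/\omega,1]$ to $a_i^\omega$. For $s\in S=\prod_iS_i$, $q^a(s)=\int_0^1\prod_i I\{s_i(z)=a_i\}dz$ and $U_i(s):=\sum_a U_i(a)q^a(s)$. Learning process (states observed once per period): each agent has state $x_i=[s_i^b,m_i]$, $m_i\in\{C,D\}$. In a period, all play baseline $s^b$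 (evaluation), then trial strategies $s^t$, then acceptance strategies $s^a$, with phase utilities $u_i^b,u_i^t,u_i^a$. The unperturbed process $P^0$ is the version in which: every phase utility equals the exact expected utility of the joint strategy played in that phase ($u_i^b=U_i(s^b)$, $u_i^t=U_i(s^t)$, $u_i^a=U_i(s^a)$); a content agent always chooses $s_i^t=s_i^b$; a discontent agent chooses $s_i^t$ uniformly at random from $S_i$, independently of others; a content agent's acceptance strategy is $s_i^a=s_i^t$ if $u_i^t>u_i^b$ and $s_i^b$ otherwise (so here $s_i^a=s_i^b$); a discontent agent uses $s_i^a=s_i^t$. State update: a content agent that did not experiment keeps $[s_i^b,C]$ if $u_i^a\ge u_i^b$ and becomes $[s_i^b,D]$ if $u_i^a<u_i^b$; a discontent agent moves to $[s_i^a,D]$ (it never becomes content). *)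

theory Defs
  imports "HOL-Analysis.Analysis"
begin

datatype mood = Content | Discontent

definition profiles :: "('n \<Rightarrow> 'a set) \<Rightarrow> ('n \<Rightarrow> 'a) set" where
  "profiles A = {a. \<forall>i. a i \<in> A i}"

definition interdependent :: "('n \<Rightarrow> 'a set) \<Rightarrow> ('n \<Rightarrow> ('n \<Rightarrow> 'a) \<Rightarrow> real) \<Rightarrow> bool" where
  "interdependent A U \<longleftrightarrow>
     (\<forall>a \<in> profiles A. \<forall>J. J \<noteq> {} \<and> J \<noteq> UNIV \<longrightarrow>
        (\<exists>i. i \<notin> J \<and> (\<exists>a'. (\<forall>j\<in>J. a' j \<in> A j) \<and>
            U i (\<lambda>j. if j \<in> J then a' j else a j) \<noteq> U i a)))"

definition strategies :: "('n \<Rightarrow> 'a set) \<Rightarrow> nat \<Rightarrow> 'n \<Rightarrow> 'a list set" where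
  "strategies A \<Omega> i = {s. 1 \<le> length s \<and> length s \<le> \<Omega> \<and> set s \<subseteq> A i}"

text \<open>A strategy (a^1,...,a^w) as a map [0,1] -> A_i: z in [(k-1)/w, k/w) goes to a^k (k<w),
  z in [(w-1)/w,1] goes to a^w (0-based index below).\<close>
definition strat_eval :: "'a list \<Rightarrow> real \<Rightarrow> 'a" where
  "strat_eval s z = s ! min (nat \<lfloor>z * real (length s)\<rfloor>) (length s - 1)"

definition qprob :: "('n::finite \<Rightarrow> 'a) \<Rightarrow> ('n \<Rightarrow> 'a list) \<Rightarrow> real" where
  "qprob a s = integral {0..1} (\<lambda>z. \<Prod>i\<in>UNIV. if strat_eval (s i) z = a i then 1 else 0)"

definition strat_util ::
  "('n::finite \<Rightarrow> 'a set) \<Rightarrow> ('n \<Rightarrow> ('n \<Rightarrow> 'a) \<Rightarrow> real) \<Rightarrow> 'n \<Rightarrow> ('n \<Rightarrow> 'a list) \<Rightarrow> real" where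
  "strat_util A U i s = (\<Sum>a\<in>profiles A. U i a * qprob a s)"

definition states :: "('n \<Rightarrow> 'a set) \<Rightarrow> nat \<Rightarrow> ('n \<Rightarrow> 'a list \<times> mood) set" where
  "states A \<Omega> = {x. \<forall>i. fst (x i) \<in> strategies A \<Omega> i}"

text \<open>One period of the unperturbed process, given the trial draws t (t i is agent i's
  uniformly drawn trial strategy; it is used only if i is discontent).\<close>
definition step0 ::
  "('n::finite \<Rightarrow> 'a set) \<Rightarrow> ('n \<Rightarrow> ('n \<Rightarrow> 'a) \<Rightarrow> real) \<Rightarrow>
   ('n \<Rightarrow> 'a list \<times> mood) \<Rightarrow> ('n \<Rightarrow> 'a list) \<Rightarrow> ('n \<Rightarrow> 'a list \<times> mood)" where
  "step0 A U x t = (\<lambda>i.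
     let sb = (\<lambda>j. fst (x j));
         sa = (\<lambda>j. if snd (x j) = Content then fst (x j) else t j)
     in if snd (x i) = Content
        then (if strat_util A U i sa \<ge> strat_util A U i sb then (fst (x i), Content)
              else (fst (x i), Discontent))
        else (t i, Discontent))"

definition P0 ::
  "('n::finite \<Rightarrow> 'a set) \<Rightarrow> ('n \<Rightarrow> ('n \<Rightarrow> 'a) \<Rightarrow> real) \<Rightarrow> nat \<Rightarrow>
   ('n \<Rightarrow> 'a list \<times> mood) \<Rightarrow> ('n \<Rightarrow> 'a list \<times> mood) \<Rightarrow> real" where
  "P0 A U \<Omega> x y =
     real (card {t \<in> Pi\<^sub>E UNIV (strategies A \<Omega>). step0 A U x t = y})
     / real (card (Pi\<^sub>E UNIV (strategies A \<Omega>)))"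

definition accessible ::
  "('n::finite \<Rightarrow> 'a set) \<Rightarrow> ('n \<Rightarrow> ('n \<Rightarrow> 'a) \<Rightarrow> real) \<Rightarrow> nat \<Rightarrow>
   ('n \<Rightarrow> 'a list \<times> mood) \<Rightarrow> ('n \<Rightarrow> 'a list \<times> mood) \<Rightarrow> bool" where
  "accessible A U \<Omega> x y \<longleftrightarrow>
     (x, y) \<in> {(u, v). u \<in> states A \<Omega> \<and> v \<in> states A \<Omega> \<and> P0 A U \<Omega> u v > 0}\<^sup>*"

text \<open>Recurrent class of a finite Markov chain: a nonempty closed communicating class,
  i.e. a nonempty set R of states such that from every x in R exactly R is accessible.\<close>
definition recurrent_class ::
  "('n::finite \<Rightarrow> 'a set) \<Rightarrow> ('n \<Rightarrow> ('n \<Rightarrow> 'a) \<Rightarrow> real) \<Rightarrow> nat \<Rightarrow>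
   ('n \<Rightarrow> 'a list \<times> mood) set \<Rightarrow> bool" where
  "recurrent_class A U \<Omega> R \<longleftrightarrow> R \<noteq> {} \<and> R \<subseteq> states A \<Omega> \<and>
     (\<forall>x\<in>R. {y. accessible A U \<Omega> x y} = R)"

end

theory Submission
  imports Defs
begin

text \<open>Once every agent is content nobody experiments and no utility changes, so such a state
  is absorbing; once every agent is discontent nobody ever becomes content again, and one joint
  draw of trial strategies moves to any all-discontent state. The point is that a state with both
  content and discontent agents is transient. By interdependence some content agent \<open>i\<close> is
  affected by the discontent agents \<open>J\<close>: letting \<open>J\<close> vary only the first of \<open>\<Omega>\<close> equal segments of
  their strategies changes \<open>i\<close>'s expected utility by \<open>1/\<Omega>\<close> times the change of its pure utility at
  the initial actions, so there are trial profiles \<open>lo\<close>, \<open>hi\<close> for \<open>J\<close> with \<open>U\<^sub>i(lo) < U\<^sub>i(hi)\<close>.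
  Playing \<open>hi\<close> and then \<open>lo\<close> either upsets some content agent in the first period or upsets \<open>i\<close> in
  the second. Iterating, every mixed state reaches the all-discontent class.\<close>

subsection \<open>Expected utility of step strategies\<close>

lemma prod_indicator_UNIV:
  "(\<Prod>i\<in>(UNIV::'n::finite set). if P i then 1 else (0::real)) = (if \<forall>i. P i then 1 else 0)"
  by (auto intro: prod_zero)

lemma strat_eval_initial_segment:
  assumes "s \<noteq> []" "length s \<le> \<Omega>" "0 \<le> z" "z < 1 / real \<Omega>"
  shows "strat_eval s z = hd s"
proof -
  have "real \<Omega> > 0"
    using assms(1,2) by (cases s) auto
  have "z * real (length s) \<le> z * real \<Omega>"
    using assms(2,3) by (simp add: mult_left_mono)
  also have "\<dots> < 1"
    using assms(4) \<open>real \<Omega> > 0\<close> by (simp add: less_divide_eq)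
  finally have "\<lfloor>z * real (length s)\<rfloor> = 0"
    using assms(3) by (simp add: floor_eq_iff)
  then show ?thesis
    using assms(1) by (simp add: strat_eval_def hd_conv_nth)
qed

lemma strat_eval_Cons_replicate_tail:
  assumes "\<Omega> \<ge> 1" "1 / real \<Omega> \<le> z" "z < 1"
  shows "strat_eval (a # replicate (\<Omega> - 1) w) z = w"
proof -
  have "1 \<le> z * real \<Omega>" "z * real \<Omega> < real \<Omega>"
    using assms by (simp_all add: field_simps)
  then have "1 \<le> nat \<lfloor>z * real \<Omega>\<rfloor>" "nat \<lfloor>z * real \<Omega>\<rfloor> < \<Omega>"
    by (simp_all add: le_nat_iff le_floor_iff nat_less_iff floor_less_iff)
  then show ?thesis
    using assms(1) by (auto simp: strat_eval_def nth_Cons')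
qed

lemma strat_eval_indicator_borel:
  "(\<lambda>z. if strat_eval s z = b then 1 else (0::real)) \<in> borel_measurable borel"
proof -
  have "(\<lambda>z. if strat_eval s z = b then 1 else (0::real))
      = (\<lambda>k. if s ! min (nat k) (length s - 1) = b then 1 else 0) \<circ> (\<lambda>z. \<lfloor>z * real (length s)\<rfloor>)"
    by (auto simp: strat_eval_def)
  moreover have "(\<lambda>z. \<lfloor>z * real (length s)\<rfloor>) \<in> measurable borel (count_space UNIV)"
    by measurable
  ultimately show ?thesis
    by (simp add: measurable_comp)
qed

lemma qprob_integrand_integrable:
  "(\<lambda>z. \<Prod>i\<in>(UNIV::'n::finite set). if strat_eval (s i) z = a i then 1 else (0::real))
     integrable_on {0..1}"
proof (rule measurable_bounded_by_integrable_imp_integrable[where g = "\<lambda>_. 1"])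
  have "(\<lambda>z. \<Prod>i\<in>(UNIV::'n set). if strat_eval (s i) z = a i then 1 else (0::real))
          \<in> borel_measurable borel"
    by (intro borel_measurable_prod strat_eval_indicator_borel)
  then show "(\<lambda>z. \<Prod>i\<in>(UNIV::'n set). if strat_eval (s i) z = a i then 1 else (0::real))
          \<in> borel_measurable (lebesgue_on {0..1})"
    using measurable_comp[OF id_borel_measurable_lebesgue_on] by (simp add: comp_def)
qed (auto simp: abs_prod intro!: prod_le_1)

lemma qprob_diff_initial_segment:
  fixes s s' :: "'n::finite \<Rightarrow> 'a list"
  assumes c: "0 \<le> c" "c \<le> 1"
    and initial: "\<And>z i. 0 \<le> z \<Longrightarrow> z < c \<Longrightarrow> strat_eval (s i) z = p i \<and> strat_eval (s' i) z = p' i"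
    and tail: "\<And>z i. c \<le> z \<Longrightarrow> z < 1 \<Longrightarrow> strat_eval (s i) z = strat_eval (s' i) z"
  shows "qprob b s - qprob b s' = c * ((if p = b then 1 else 0) - (if p' = b then 1 else 0))"
proof -
  define f where "f s z = (\<Prod>i\<in>(UNIV::'n set). if strat_eval (s i) z = b i then 1 else (0::real))"
    for s :: "'n \<Rightarrow> 'a list" and z
  define d where "d = (if p = b then 1 else 0) - (if p' = b then 1 else (0::real))"
  have integrable: "(\<lambda>z. f s z - f s' z) integrable_on {0..1}"
    unfolding f_def by (intro integrable_diff qprob_integrand_integrable)
  have "qprob b s - qprob b s' = integral {0..1} (\<lambda>z. f s z - f s' z)"
    unfolding qprob_def f_def by (intro integral_diff[symmetric] qprob_integrand_integrable)
  also have "\<dots> = integral {0..c} (\<lambda>z. f s z - f s' z) + integral {c..1} (\<lambda>z. f s z - f s' z)"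
    using Henstock_Kurzweil_Integration.integral_combine[OF c integrable] by simp
  also have "integral {c..1} (\<lambda>z. f s z - f s' z) = integral {c..1} (\<lambda>z. 0)"
    by (rule integral_spike[of "{1}"]) (use tail in \<open>auto simp: f_def\<close>)
  also have "integral {0..c} (\<lambda>z. f s z - f s' z) = integral {0..c} (\<lambda>z. d)"
  proof (rule integral_spike[of "{c}"])
    fix z
    assume "z \<in> {0..c} - {c}"
    then have "strat_eval (s i) z = p i \<and> strat_eval (s' i) z = p' i" for i
      using initial by auto
    then show "d = f s z - f s' z"
      by (simp add: f_def d_def prod_indicator_UNIV fun_eq_iff eq_commute)
  qed simp
  finally show ?thesis
    using c by (simp add: d_def)
qed

lemma finite_profiles: "(\<And>i. finite (A i)) \<Longrightarrow> finite (profiles (A :: 'n::finite \<Rightarrow> 'a set))"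
  by (rule finite_subset[of _ "Pi\<^sub>E UNIV A"]) (auto simp: profiles_def intro: finite_PiE)

text \<open>Strategies of length at most \<open>\<Omega>\<close> play their first action on \<open>[0, 1/\<Omega>)\<close>, so if two
  profiles agree after \<open>1/\<Omega>\<close>, only that segment contributes to the difference.\<close>
lemma strat_util_diff_initial_actions:
  fixes s s' :: "'n::finite \<Rightarrow> 'a list"
  assumes fin: "\<And>j. finite (A j)"
    and s: "\<And>j. s j \<in> strategies A \<Omega> j" and s': "\<And>j. s' j \<in> strategies A \<Omega> j"
    and tail: "\<And>z j. 1 / real \<Omega> \<le> z \<Longrightarrow> z < 1 \<Longrightarrow> strat_eval (s j) z = strat_eval (s' j) z"
  shows "strat_util A U i s - strat_util A U i s'
       = (U i (\<lambda>j. hd (s j)) - U i (\<lambda>j. hd (s' j))) / real \<Omega>"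
proof -
  let ?p = "\<lambda>j. hd (s j)" and ?p' = "\<lambda>j. hd (s' j)"
  have ne: "s j \<noteq> []" "s' j \<noteq> []" and len: "length (s j) \<le> \<Omega>" "length (s' j) \<le> \<Omega>"
    and set: "set (s j) \<subseteq> A j" "set (s' j) \<subseteq> A j" for j
    using s[of j] s'[of j] by (auto simp: strategies_def)
  have "\<Omega> \<ge> 1"
    using s[of undefined] by (auto simp: strategies_def)
  have q: "qprob b s - qprob b s' = 1 / real \<Omega> * ((if ?p = b then 1 else 0) - (if ?p' = b then 1 else 0))"
    for b
    using \<open>\<Omega> \<ge> 1\<close> strat_eval_initial_segment[OF ne(1) len(1)]
      strat_eval_initial_segment[OF ne(2) len(2)]
    by (intro qprob_diff_initial_segment tail) auto
  have profiles: "?p \<in> profiles A" "?p' \<in> profiles A"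
    by (simp_all add: profiles_def subsetD[OF set(1) hd_in_set[OF ne(1)]]
        subsetD[OF set(2) hd_in_set[OF ne(2)]])
  have "finite (profiles A)"
    by (rule finite_profiles) (rule fin)
  have "strat_util A U i s - strat_util A U i s' = (\<Sum>b\<in>profiles A. U i b * (qprob b s - qprob b s'))"
    by (simp add: strat_util_def sum_subtractf[symmetric] algebra_simps)
  also have "\<dots> = (\<Sum>b\<in>profiles A. (if ?p = b then U i b else 0) - (if ?p' = b then U i b else 0))
      / real \<Omega>"
    unfolding q sum_divide_distrib by (intro sum.cong) auto
  also have "\<dots> = (U i ?p - U i ?p') / real \<Omega>"
    using profiles \<open>finite (profiles A)\<close> by (simp add: sum_subtractf)
  finally show ?thesis .
qed

subsection \<open>The unperturbed process\<close>

lemma mood_neq_Discontent_iff [simp]: "m \<noteq> Discontent \<longleftrightarrow> m = Content"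
  by (cases m) auto

lemma mood_neq_Content_iff [simp]: "m \<noteq> Content \<longleftrightarrow> m = Discontent"
  by (cases m) auto

abbreviation trial_draws :: "('n::finite \<Rightarrow> 'a set) \<Rightarrow> nat \<Rightarrow> ('n \<Rightarrow> 'a list) set" where
  "trial_draws A \<Omega> \<equiv> Pi\<^sub>E UNIV (strategies A \<Omega>)"

lemma finite_strategies: "finite (A i) \<Longrightarrow> finite (strategies A \<Omega> i)"
  by (rule finite_subset[OF _ finite_lists_length_le]) (auto simp: strategies_def)

lemma finite_trial_draws: "(\<And>i. finite (A i)) \<Longrightarrow> finite (trial_draws A \<Omega>)"
  by (simp add: finite_PiE finite_strategies)

lemma P0_pos_iff:
  assumes "\<And>i. finite (A i)"
  shows "0 < P0 A U \<Omega> x y \<longleftrightarrow> (\<exists>t \<in> trial_draws A \<Omega>. step0 A U x t = y)"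
proof -
  have "finite (trial_draws A \<Omega>)"
    by (rule finite_trial_draws[OF assms])
  then show ?thesis
    by (auto simp: P0_def card_gt_0_iff zero_less_divide_iff)
qed

lemma step0_Content:
  "snd (x i) = Content \<Longrightarrow> step0 A U x t i =
     (fst (x i),
      if strat_util A U i (\<lambda>j. if snd (x j) = Content then fst (x j) else t j)
           \<ge> strat_util A U i (\<lambda>j. fst (x j))
      then Content else Discontent)"
  by (simp add: step0_def Let_def)

lemma step0_Discontent: "snd (x i) = Discontent \<Longrightarrow> step0 A U x t i = (t i, Discontent)"
  by (simp add: step0_def Let_def)

lemma step0_all_Content: "\<forall>i. snd (x i) = Content \<Longrightarrow> step0 A U x t = x"
  by (simp add: fun_eq_iff prod_eq_iff step0_Content)

lemma step0_in_states:
  "x \<in> states A \<Omega> \<Longrightarrow> t \<in> trial_draws A \<Omega> \<Longrightarrow> step0 A U x t \<in> states A \<Omega>"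
  by (auto simp: states_def PiE_iff step0_def Let_def)

lemma accessible_step0:
  assumes "\<And>i. finite (A i)" "x \<in> states A \<Omega>" "t \<in> trial_draws A \<Omega>"
  shows "accessible A U \<Omega> x (step0 A U x t)"
  using assms step0_in_states[OF assms(2,3)]
  unfolding accessible_def by (intro r_into_rtrancl) (auto simp: P0_pos_iff)

lemma accessible_trans:
  "accessible A U \<Omega> x y \<Longrightarrow> accessible A U \<Omega> y z \<Longrightarrow> accessible A U \<Omega> x z"
  unfolding accessible_def by (rule rtrancl_trans)

lemma accessible_closed_set:
  assumes fin: "\<And>i. finite (A i)" and "accessible A U \<Omega> x y" "x \<in> R"
    and closed: "\<And>u t. u \<in> R \<Longrightarrow> u \<in> states A \<Omega> \<Longrightarrow> t \<in> trial_draws A \<Omega> \<Longrightarrow> step0 A U u t \<in> R"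
  shows "y \<in> R"
  using assms(2,3) unfolding accessible_def
proof (induction rule: rtrancl_induct)
  case (step y z)
  then show ?case
    using closed by (auto simp: P0_pos_iff[OF fin])
qed

lemma accessible_states:
  "(\<And>i. finite (A i)) \<Longrightarrow> accessible A U \<Omega> x y \<Longrightarrow> x \<in> states A \<Omega> \<Longrightarrow> y \<in> states A \<Omega>"
  by (rule accessible_closed_set) (auto intro: step0_in_states)

subsection \<open>Recurrent classes\<close>

lemma recurrent_class_eqI:
  assumes "recurrent_class A U \<Omega> R" "recurrent_class A U \<Omega> R'"
    and "x \<in> R" "accessible A U \<Omega> x y" "y \<in> R'"
  shows "R = R'"
proof -
  have "R = {z. accessible A U \<Omega> x z}"
    using assms(1,3) by (simp add: recurrent_class_def)
  then have "y \<in> R"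
    using assms(4) by simp
  then have "R = {z. accessible A U \<Omega> y z}"
    using assms(1) by (simp add: recurrent_class_def)
  also have "\<dots> = R'"
    using assms(2,5) by (simp add: recurrent_class_def)
  finally show ?thesis .
qed

lemma recurrent_class_all_Content:
  assumes fin: "\<And>i. finite (A i)" and x: "x \<in> states A \<Omega>" and C: "\<forall>i. snd (x i) = Content"
  shows "recurrent_class A U \<Omega> {x}"
proof -
  have "y \<in> {x}" if "accessible A U \<Omega> x y" for y
    by (rule accessible_closed_set[of A U \<Omega> x y]) (use fin that step0_all_Content[OF C] in auto)
  then have "{y. accessible A U \<Omega> x y} = {x}"
    by (auto simp: accessible_def)
  then show ?thesis
    using x by (simp add: recurrent_class_def)
qed

lemma recurrent_class_all_Discontent:
  assumes fin: "\<And>i. finite (A i)" and ne: "\<And>i. A i \<noteq> {}" and "\<Omega> \<ge> 1"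
  shows "recurrent_class A U \<Omega> {x \<in> states A \<Omega>. \<forall>i. snd (x i) = Discontent}"
    (is "recurrent_class A U \<Omega> ?D")
proof -
  have "(\<lambda>i. ([SOME a. a \<in> A i], Discontent)) \<in> ?D"
    using ne \<open>\<Omega> \<ge> 1\<close> by (auto simp: states_def strategies_def some_in_eq)
  moreover have "{y. accessible A U \<Omega> x y} = ?D" if x: "x \<in> ?D" for x
  proof (intro equalityI subsetI)
    fix y
    assume "y \<in> {y. accessible A U \<Omega> x y}"
    moreover have "step0 A U u t \<in> ?D" if "u \<in> ?D" "t \<in> trial_draws A \<Omega>" for u t
      using that by (auto simp: step0_Discontent step0_in_states)
    ultimately show "y \<in> ?D"
      using accessible_closed_set[of A U \<Omega> x y ?D] fin x by blast
  next
    fix y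
    assume y: "y \<in> ?D"
    then have "(\<lambda>i. fst (y i)) \<in> trial_draws A \<Omega>"
      by (auto simp: states_def)
    moreover have "step0 A U x (\<lambda>i. fst (y i)) = y"
      using x y by (auto simp: step0_Discontent prod_eq_iff)
    ultimately show "y \<in> {y. accessible A U \<Omega> x y}"
      using accessible_step0[of A x \<Omega> "\<lambda>i. fst (y i)" U] fin x by auto
  qed
  ultimately show ?thesis
    unfolding recurrent_class_def by blast
qed

subsection \<open>Mixed states are transient\<close>

definition initial_deviation ::
  "nat \<Rightarrow> 'n set \<Rightarrow> ('n \<Rightarrow> 'a list) \<Rightarrow> ('n \<Rightarrow> 'a) \<Rightarrow> 'n \<Rightarrow> 'a list" where
  "initial_deviation \<Omega> J sb a j = (if j \<in> J then a j # replicate (\<Omega> - 1) (hd (sb j)) else sb j)"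

lemma hd_strategy_in_actions: "s \<in> strategies A \<Omega> i \<Longrightarrow> hd s \<in> A i"
  by (cases s) (auto simp: strategies_def)

lemma initial_deviation_in_strategies:
  assumes "\<Omega> \<ge> 1" "sb j \<in> strategies A \<Omega> j" "j \<in> J \<Longrightarrow> a j \<in> A j"
  shows "initial_deviation \<Omega> J sb a j \<in> strategies A \<Omega> j"
  using assms hd_strategy_in_actions[OF assms(2)]
  by (auto simp: initial_deviation_def strategies_def)

lemma hd_initial_deviation:
  "hd (initial_deviation \<Omega> J sb a j) = (if j \<in> J then a j else hd (sb j))"
  by (simp add: initial_deviation_def)

lemma strat_util_initial_deviation_diff:
  fixes sb :: "'n::finite \<Rightarrow> 'a list"
  assumes fin: "\<And>j. finite (A j)" and "\<Omega> \<ge> 1" and sb: "\<And>j. sb j \<in> strategies A \<Omega> j"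
    and a: "\<And>j. j \<in> J \<Longrightarrow> a j \<in> A j" and a': "\<And>j. j \<in> J \<Longrightarrow> a' j \<in> A j"
  shows "strat_util A U i (initial_deviation \<Omega> J sb a) - strat_util A U i (initial_deviation \<Omega> J sb a')
       = (U i (\<lambda>j. if j \<in> J then a j else hd (sb j))
          - U i (\<lambda>j. if j \<in> J then a' j else hd (sb j))) / real \<Omega>"
proof -
  let ?T = "initial_deviation \<Omega> J sb"
  have tail: "strat_eval (?T a j) z = strat_eval (?T a' j) z" if "1 / real \<Omega> \<le> z" "z < 1" for j z
    by (cases "j \<in> J") (simp_all only: initial_deviation_def if_True if_False
        strat_eval_Cons_replicate_tail[OF \<open>\<Omega> \<ge> 1\<close> that])
  have "strat_util A U i (?T a) - strat_util A U i (?T a')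
      = (U i (\<lambda>j. hd (?T a j)) - U i (\<lambda>j. hd (?T a' j))) / real \<Omega>"
  proof (rule strat_util_diff_initial_actions[OF fin _ _ tail])
    show "?T a j \<in> strategies A \<Omega> j" "?T a' j \<in> strategies A \<Omega> j" for j
      using initial_deviation_in_strategies[of \<Omega> sb j A J] \<open>\<Omega> \<ge> 1\<close> sb a a' by blast+
  qed
  also have "\<dots> = (U i (\<lambda>j. if j \<in> J then a j else hd (sb j))
      - U i (\<lambda>j. if j \<in> J then a' j else hd (sb j))) / real \<Omega>"
    by (simp add: hd_initial_deviation)
  finally show ?thesis .
qed

lemma exists_utility_gap:
  fixes A :: "'n::finite \<Rightarrow> 'a set" and U :: "'n \<Rightarrow> ('n \<Rightarrow> 'a) \<Rightarrow> real"
  assumes fin: "\<And>i. finite (A i)" and interdep: "interdependent A U" and "\<Omega> \<ge> 1"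
    and x: "x \<in> states A \<Omega>"
    and D: "snd (x i\<^sub>D) = Discontent" and C: "snd (x i\<^sub>C) = Content"
  obtains i lo hi where "snd (x i) = Content" "lo \<in> trial_draws A \<Omega>" "hi \<in> trial_draws A \<Omega>"
    "\<And>j. snd (x j) = Content \<Longrightarrow> lo j = fst (x j) \<and> hi j = fst (x j)"
    "strat_util A U i lo < strat_util A U i hi"
proof -
  define J where "J = {j. snd (x j) = Discontent}"
  define sb where "sb j = fst (x j)" for j
  define c where "c = (\<lambda>j. hd (sb j))"
  let ?T = "initial_deviation \<Omega> J sb"
  have sb: "sb j \<in> strategies A \<Omega> j" for j
    using x by (simp add: sb_def states_def)
  then have c: "c j \<in> A j" for j
    unfolding c_def by (rule hd_strategy_in_actions)
  have "i\<^sub>D \<in> J" "i\<^sub>C \<notin> J"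
    using D C by (simp_all add: J_def)
  then have "J \<noteq> {}" "J \<noteq> UNIV"
    by auto
  moreover have "c \<in> profiles A"
    using c by (simp add: profiles_def)
  ultimately obtain i a where i: "i \<notin> J" and a: "\<forall>j\<in>J. a j \<in> A j"
    and neq: "U i (\<lambda>j. if j \<in> J then a j else c j) \<noteq> U i c"
    using interdep unfolding interdependent_def by blast
  have "strat_util A U i (?T a) - strat_util A U i (?T c)
      = (U i (\<lambda>j. if j \<in> J then a j else c j) - U i c) / real \<Omega>"
    using strat_util_initial_deviation_diff[OF fin \<open>\<Omega> \<ge> 1\<close> sb, of J a c] a c
    unfolding c_def by simp
  then have "strat_util A U i (?T a) \<noteq> strat_util A U i (?T c)"
    using neq \<open>\<Omega> \<ge> 1\<close> by auto
  then consider "strat_util A U i (?T c) < strat_util A U i (?T a)"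
    | "strat_util A U i (?T a) < strat_util A U i (?T c)"
    by linarith
  moreover have "?T b j \<in> strategies A \<Omega> j" if "\<forall>j\<in>J. b j \<in> A j" for b j
    using that by (intro initial_deviation_in_strategies \<open>\<Omega> \<ge> 1\<close> sb) auto
  then have "?T a \<in> trial_draws A \<Omega>" "?T c \<in> trial_draws A \<Omega>"
    using a c by (simp_all add: PiE_iff)
  moreover have "snd (x i) = Content"
    using i by (simp add: J_def)
  moreover have "?T b j = fst (x j)" if "snd (x j) = Content" for b j
    using that by (simp add: initial_deviation_def J_def sb_def)
  ultimately show ?thesis
    using that by metis
qed

lemma reach_more_Discontent:
  fixes A :: "'n::finite \<Rightarrow> 'a set" and U :: "'n \<Rightarrow> ('n \<Rightarrow> 'a) \<Rightarrow> real"
  assumes fin: "\<And>i. finite (A i)" and interdep: "interdependent A U" and "\<Omega> \<ge> 1"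
    and x: "x \<in> states A \<Omega>"
    and D: "snd (x i\<^sub>D) = Discontent" and C: "snd (x i\<^sub>C) = Content"
  shows "\<exists>y. accessible A U \<Omega> x y \<and>
           {k. snd (x k) = Discontent} \<subset> {k. snd (y k) = Discontent}"
proof -
  obtain i lo hi where i: "snd (x i) = Content" and lo: "lo \<in> trial_draws A \<Omega>"
    and hi: "hi \<in> trial_draws A \<Omega>"
    and off_J: "\<And>j. snd (x j) = Content \<Longrightarrow> lo j = fst (x j) \<and> hi j = fst (x j)"
    and gap: "strat_util A U i lo < strat_util A U i hi"
    using exists_utility_gap[OF fin interdep \<open>\<Omega> \<ge> 1\<close> x D C] by blast
  define y where "y = step0 A U x hi"
  have acc_y: "accessible A U \<Omega> x y"
    unfolding y_def by (rule accessible_step0[OF fin x hi])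
  have J_y: "{k. snd (x k) = Discontent} \<subseteq> {k. snd (y k) = Discontent}"
    by (auto simp: y_def step0_Discontent)
  show ?thesis
  proof (cases "\<forall>k. snd (y k) = snd (x k)")
    case False
    then obtain k where "snd (y k) \<noteq> snd (x k)"
      by blast
    then have "snd (x k) = Content" "snd (y k) = Discontent"
      by (cases "snd (x k)"; cases "snd (y k)"; simp add: y_def step0_Discontent)+
    then have "k \<in> {k. snd (y k) = Discontent} - {k. snd (x k) = Discontent}"
      by simp
    then show ?thesis
      using acc_y J_y by blast
  next
    case True
    txt \<open>Nobody was upset: the period only made the discontent agents adopt \<open>hi\<close>. Now
      \<open>i\<close>'s baseline is \<open>hi\<close> while everybody accepts \<open>lo\<close>.\<close>
    have y: "y k = (hi k, snd (x k))" for k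
      using True[rule_format, of k] off_J[of k]
      by (cases "snd (x k)") (simp_all add: y_def step0_Content step0_Discontent prod_eq_iff)
    define z where "z = step0 A U y lo"
    have "accessible A U \<Omega> x z"
      unfolding z_def
      by (rule accessible_trans[OF acc_y accessible_step0[OF fin _ lo]])
        (simp add: y_def step0_in_states[OF x hi])
    moreover have "(\<lambda>j. if snd (y j) = Content then fst (y j) else lo j) = lo"
      using off_J by (auto simp: y)
    then have "i \<in> {k. snd (z k) = Discontent} - {k. snd (x k) = Discontent}"
      using gap i by (simp add: z_def step0_Content y)
    moreover have "{k. snd (x k) = Discontent} \<subseteq> {k. snd (z k) = Discontent}"
      by (auto simp: z_def y step0_Discontent)
    ultimately show ?thesis
      by blast
  qed
qed

lemma reach_all_Discontent:
  fixes A :: "'n::finite \<Rightarrow> 'a set" and U :: "'n \<Rightarrow> ('n \<Rightarrow> 'a) \<Rightarrow> real"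
  assumes fin: "\<And>i. finite (A i)" and interdep: "interdependent A U" and "\<Omega> \<ge> 1"
  shows "x \<in> states A \<Omega> \<Longrightarrow> snd (x i\<^sub>D) = Discontent \<Longrightarrow>
     \<exists>d. accessible A U \<Omega> x d \<and> (\<forall>i. snd (d i) = Discontent)"
proof (induction "card {i. snd (x i) = Content}" arbitrary: x i\<^sub>D rule: less_induct)
  case (less x)
  show ?case
  proof (cases "\<exists>i\<^sub>C. snd (x i\<^sub>C) = Content")
    case False
    then have "\<forall>i. snd (x i) = Discontent"
      by simp
    then show ?thesis
      by (intro exI[of _ x]) (simp add: accessible_def)
  next
    case True
    then obtain y where y: "accessible A U \<Omega> x y"
      and more: "{i. snd (x i) = Discontent} \<subset> {i. snd (y i) = Discontent}"
      using reach_more_Discontent[OF fin interdep \<open>\<Omega> \<ge> 1\<close> less.prems] by blast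
    have "{i. snd (y i) = Content} \<subset> {i. snd (x i) = Content}"
      using more by (simp only: mood_neq_Discontent_iff[symmetric]) blast
    then have "card {i. snd (y i) = Content} < card {i. snd (x i) = Content}"
      by (simp add: psubset_card_mono)
    then obtain d where "accessible A U \<Omega> y d" "\<forall>i. snd (d i) = Discontent"
      using less.hyps accessible_states[OF fin y less.prems(1)] more less.prems(2) by blast
    then show ?thesis
      using accessible_trans[OF y] by blast
  qed
qed

lemma recurrent_class_not_mixed:
  fixes A :: "'n::finite \<Rightarrow> 'a set" and U :: "'n \<Rightarrow> ('n \<Rightarrow> 'a) \<Rightarrow> real"
  assumes fin: "\<And>i. finite (A i)" and ne: "\<And>i. A i \<noteq> {}"
    and interdep: "interdependent A U" and "\<Omega> \<ge> 1"
    and R: "recurrent_class A U \<Omega> R" and "x \<in> R"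
  shows "(\<forall>i. snd (x i) = Content) \<or> (\<forall>i. snd (x i) = Discontent)"
proof (rule ccontr)
  let ?D = "{x \<in> states A \<Omega>. \<forall>i. snd (x i) = Discontent}"
  assume "\<not> ?thesis"
  then obtain i\<^sub>D i\<^sub>C where D: "snd (x i\<^sub>D) = Discontent" and C: "snd (x i\<^sub>C) = Content"
    by auto
  have x: "x \<in> states A \<Omega>"
    using R \<open>x \<in> R\<close> by (auto simp: recurrent_class_def)
  obtain d where "accessible A U \<Omega> x d" "\<forall>i. snd (d i) = Discontent"
    using reach_all_Discontent[OF fin interdep \<open>\<Omega> \<ge> 1\<close> x D] by blast
  then have "R = ?D"
    using recurrent_class_eqI[OF R recurrent_class_all_Discontent[OF fin ne \<open>\<Omega> \<ge> 1\<close>] \<open>x \<in> R\<close>]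
      accessible_states[OF fin _ x] by blast
  then show False
    using \<open>x \<in> R\<close> C by auto
qed

theorem lemma1:
  fixes A :: "'n::finite \<Rightarrow> 'a set"
    and U :: "'n \<Rightarrow> ('n \<Rightarrow> 'a) \<Rightarrow> real"
    and \<Omega> :: nat
  assumes fin: "\<And>i. finite (A i)"
    and nonempty: "\<And>i. A i \<noteq> {}"
    and util_range: "\<And>i a. a \<in> profiles A \<Longrightarrow> 0 \<le> U i a \<and> U i a \<le> 1"
    and interdep: "interdependent A U"
    and Omega: "\<Omega> \<ge> 1"
  shows "(\<forall>x \<in> states A \<Omega>.
            (\<exists>R. recurrent_class A U \<Omega> R \<and> x \<in> R) \<longleftrightarrow>
            ((\<forall>i. snd (x i) = Content) \<or> (\<forall>i. snd (x i) = Discontent)))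
       \<and> (\<forall>x \<in> states A \<Omega>. (\<forall>i. snd (x i) = Content) \<longrightarrow> recurrent_class A U \<Omega> {x})
       \<and> recurrent_class A U \<Omega> {x \<in> states A \<Omega>. \<forall>i. snd (x i) = Discontent}"
proof -
  let ?D = "{x \<in> states A \<Omega>. \<forall>i. snd (x i) = Discontent}"
  have D: "recurrent_class A U \<Omega> ?D"
    by (rule recurrent_class_all_Discontent[OF fin nonempty Omega])
  have C: "recurrent_class A U \<Omega> {x}" if "x \<in> states A \<Omega>" "\<forall>i. snd (x i) = Content" for x
    using recurrent_class_all_Content[of A] fin that by blast
  have "(\<exists>R. recurrent_class A U \<Omega> R \<and> x \<in> R) \<longleftrightarrow>
      (\<forall>i. snd (x i) = Content) \<or> (\<forall>i. snd (x i) = Discontent)" if x: "x \<in> states A \<Omega>" for x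
    using recurrent_class_not_mixed[OF fin nonempty interdep Omega] C[OF x] D x by blast
  then show ?thesis
    using C D by blast
qed

end
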